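(* Let $K_d=[0,1]^d$ and let $(Y_n)_{n\ge1}$ be jointly measurable random fields $Y_n:\Omega\times K_d\to\mathbb R^d$, with $\mu_n(B)=\lambda_d(\{z\in K_d:Y_n(z)\in B\})$. Assume that for $\lambda_d$-a.e. $z$ the law of $Y_n(z)$ converges weakly to a probability measure $\mu_z$ (with $z\mapsto\mu_z(B)$ measurable), and define $\mu(B)=\int_{K_d}\mu_z(B)\,dz$. Let $\mathcal C$ be a countable convergence-determining class of Borel subsets of $\mathbb R^d$, and let $(\sigma(n))$ be a subsequence such that for every $B\in\mathcal C$ with $\mu(\partial B)=0$, $$\sum_{n\ge1}\int_{K_d}\int_{K_d}\mathrm{cov}\big(\mathbf 1_{\{Y_{\sigma(n)}(z)\in B\}},\mathbf 1_{\{Y_{\sigma(n)}(\zeta)\in B\}}\big)\,dz\,d\zeta<\infty.$$ Then almost surely $\mu_{\sigma(n)}\Rightarrow\mu$.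
   Context: A class $\mathcal C$ of Borel sets of $\mathbb R^d$ is convergence-determining if for probability measures $\nu_n,\nu$, convergence $\nu_n(B)\to\nu(B)$ for all $B\in\mathcal C$ with $\nu(\partial B)=0$ implies $\nu_n\Rightarrow\nu$ (such countable classes exist in $\mathbb R^d$). $\mathrm{cov}(U,V)=\mathbb E(UV)-\mathbb E U\,\mathbb E V$. *)

theory Defs
  imports "HOL-Probability.Probability"
begin

definition weak_conv_e :: "(nat \<Rightarrow> 'b::euclidean_space measure) \<Rightarrow> 'b measure \<Rightarrow> bool" where
  "weak_conv_e Ns N \<longleftrightarrow>
     (\<forall>f :: 'b \<Rightarrow> real. continuous_on UNIV f \<and> bounded (range f) \<longrightarrow>
        (\<lambda>n. integral\<^sup>L (Ns n) f) \<longlonglongrightarrow> integral\<^sup>L N f)"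

definition convergence_determining :: "'b::euclidean_space set set \<Rightarrow> bool" where
  "convergence_determining C \<longleftrightarrow> C \<subseteq> sets borel \<and>
     (\<forall>(Ns :: nat \<Rightarrow> 'b measure) (N :: 'b measure).
        (\<forall>n. prob_space (Ns n) \<and> sets (Ns n) = sets borel) \<and>
        prob_space N \<and> sets N = sets borel \<and>
        (\<forall>B\<in>C. measure N (frontier B) = 0 \<longrightarrow> (\<lambda>n. measure (Ns n) B) \<longlonglongrightarrow> measure N B)
        \<longrightarrow> weak_conv_e Ns N)"

definition unit_cube :: "(real^'d) set" where
  "unit_cube = {x. \<forall>i. 0 \<le> x $ i \<and> x $ i \<le> 1}"

definition mixture :: "(real^'d \<Rightarrow> (real^'d) measure) \<Rightarrow> (real^'d) measure" where
  "mixture mu = measure_of UNIV (sets borel)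
      (\<lambda>B. \<integral>\<^sup>+ z. indicator unit_cube z * emeasure (mu z) B \<partial>lborel)"

text \<open>Empirical random measure mu_n(omega)(B) = lambda_d({z in K_d. Y_n(omega,z) in B}).\<close>
definition occupation :: "(real^'d \<Rightarrow> real^'d) \<Rightarrow> (real^'d) measure" where
  "occupation y = distr (restrict_space lborel unit_cube) borel y"

definition ind_cov :: "'a measure \<Rightarrow> ('a \<Rightarrow> real^'d \<Rightarrow> real^'d) \<Rightarrow> (real^'d) set
                      \<Rightarrow> real^'d \<Rightarrow> real^'d \<Rightarrow> real" where
  "ind_cov M Y B z \<zeta> =
     measure M {\<omega>\<in>space M. Y \<omega> z \<in> B \<and> Y \<omega> \<zeta> \<in> B}
     - measure M {\<omega>\<in>space M. Y \<omega> z \<in> B} * measure M {\<omega>\<in>space M. Y \<omega> \<zeta> \<in> B}"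

end

theory Submission
  imports Defs
begin

text \<open>
  Fix a set B of the convergence-determining class C whose boundary is null for
  the mixture mu.  The mass mu_n(omega)(B) is the average over the cube of the indicators
  1{Y_n(omega,z) in B}.  Its expectation converges to mu(B): for a.e. z the law of Y_n(z)
  converges weakly to mu_z, B is a mu_z-continuity set for a.e. z (because mu(frontier B) = 0),
  so the portmanteau theorem and dominated convergence apply.  Its variance is, by Fubini,
  the double integral of the covariances of the indicators; these variances are summable
  along sigma, so the centred squares are summable almost surely and hence tend to zero.
  Thus mu_{sigma n}(omega)(B) tends to mu(B) almost surely; as C is countable, this holds
  almost surely for all such B at once, and C being convergence-determining concludes.
\<close>

abbreviation cube_measure :: "(real^'d) measure" where
  "cube_measure \<equiv> restrict_space lborel unit_cube"

lemma unit_cube_cbox: "(unit_cube :: (real^'d) set) = cbox 0 (vec 1)"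
  unfolding unit_cube_def by (auto simp: mem_box_cart)

lemma unit_cube_sets[measurable]: "(unit_cube :: (real^'d) set) \<in> sets borel"
  unfolding unit_cube_cbox by simp

lemma emeasure_unit_cube: "emeasure lborel (unit_cube :: (real^'d) set) = 1"
proof -
  have "(\<Prod>b\<in>Basis. ((vec 1 :: real^'d) - 0) \<bullet> b) = 1"
    by (intro prod.neutral) (auto simp: Basis_vec_def inner_axis)
  then show ?thesis
    unfolding unit_cube_cbox by (simp add: emeasure_lborel_cbox_eq Basis_vec_def inner_axis)
qed

lemma prob_space_cube_measure: "prob_space (cube_measure :: (real^'d) measure)"
  by (rule prob_spaceI) (simp add: space_restrict_space emeasure_restrict_space emeasure_unit_cube)

lemma AE_cube_measure_iff:
  "(AE z in cube_measure. P z) \<longleftrightarrow> (AE z in lborel. z \<in> (unit_cube :: (real^'d) set) \<longrightarrow> P z)"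
  by (rule AE_restrict_space_iff) simp

lemma set_integral_unit_cube:
  fixes f :: "real^'d \<Rightarrow> real"
  shows "(LINT z:unit_cube|lborel. f z) = (\<integral>z. f z \<partial>cube_measure)"
  by (simp add: set_lebesgue_integral_def integral_restrict_space)

lemma integral_abs_le_1:
  fixes f :: "'a \<Rightarrow> real"
  assumes "prob_space M" "\<And>x. \<bar>f x\<bar> \<le> 1"
  shows "\<bar>integral\<^sup>L M f\<bar> \<le> 1"
proof (cases "integrable M f")
  case True
  interpret prob_space M by fact
  have "\<bar>integral\<^sup>L M f\<bar> \<le> integral\<^sup>L M (\<lambda>x. \<bar>f x\<bar>)"
    using integral_norm_bound[of M f] by simp
  also have "\<dots> \<le> integral\<^sup>L M (\<lambda>x. 1)"
    using True assms(2) by (intro integral_mono) auto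
  finally show ?thesis using prob_space by simp
next
  case False then show ?thesis by (simp add: not_integrable_integral_eq)
qed

lemma integral_indicator_comp:
  "(\<integral>\<omega>. indicator B (f \<omega>) \<partial>M) = measure M {\<omega>\<in>space M. f \<omega> \<in> B}"
proof -
  have "(\<integral>\<omega>. indicator B (f \<omega>) \<partial>M) = (\<integral>\<omega>. indicator {\<omega>\<in>space M. f \<omega> \<in> B} \<omega> \<partial>M)"
    by (intro Bochner_Integration.integral_cong) (auto simp: indicator_def)
  also have "\<dots> = measure M ({\<omega>\<in>space M. f \<omega> \<in> B} \<inter> space M)"
    by (rule Bochner_Integration.integral_indicator)
  finally show ?thesis by (simp add: Int_absorb2)
qed

lemma Fubini_bounded:
  fixes f :: "'a \<Rightarrow> 'b \<Rightarrow> real"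
  assumes M: "prob_space M" and K: "prob_space K"
    and f: "(\<lambda>(x, y). f x y) \<in> borel_measurable (M \<Otimes>\<^sub>M K)" and bound: "\<And>x y. \<bar>f x y\<bar> \<le> c"
  shows "(\<integral>x. (\<integral>y. f x y \<partial>K) \<partial>M) = (\<integral>y. (\<integral>x. f x y \<partial>M) \<partial>K)"
proof -
  interpret pair_prob_space M K
    by (simp add: pair_prob_space_def pair_sigma_finite_def M K prob_space_imp_sigma_finite)
  have "integrable (M \<Otimes>\<^sub>M K) (\<lambda>(x, y). f x y)"
    using f bound by (intro P.integrable_const_bound[where B=c]) (auto split: prod.splits)
  then show ?thesis by (rule Fubini_integral[symmetric])
qed

lemma integral_centered_product:
  fixes f g :: "'a \<Rightarrow> real"
  assumes "prob_space M" "integrable M f" "integrable M g" "integrable M (\<lambda>x. f x * g x)"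
  shows "(\<integral>x. (f x - integral\<^sup>L M f) * (g x - integral\<^sup>L M g) \<partial>M)
           = integral\<^sup>L M (\<lambda>x. f x * g x) - integral\<^sup>L M f * integral\<^sup>L M g"
proof -
  interpret prob_space M by fact
  have "(\<lambda>x. (f x - integral\<^sup>L M f) * (g x - integral\<^sup>L M g))
      = (\<lambda>x. (f x * g x - integral\<^sup>L M f * g x) - (integral\<^sup>L M g * f x - integral\<^sup>L M f * integral\<^sup>L M g))"
    by (auto simp: algebra_simps)
  then show ?thesis
    using assms by (simp add: prob_space)
qed

lemma variance_average_indicator:
  fixes Y :: "'a \<Rightarrow> 'k \<Rightarrow> 'c::topological_space"
  assumes M: "prob_space M" and K: "prob_space K"
    and Ym[measurable]: "(\<lambda>(\<omega>, z). Y \<omega> z) \<in> borel_measurable (M \<Otimes>\<^sub>M K)"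
    and B[measurable]: "B \<in> sets borel"
  defines "I \<equiv> \<lambda>\<omega> z. indicator B (Y \<omega> z) :: real"
  defines "p \<equiv> \<lambda>z. \<integral>\<omega>. I \<omega> z \<partial>M"
  shows "(\<integral>\<omega>. ((\<integral>z. I \<omega> z \<partial>K) - (\<integral>z. p z \<partial>K))\<^sup>2 \<partial>M) =
         (\<integral>\<zeta>. (\<integral>z. (\<integral>\<omega>. I \<omega> z * I \<omega> \<zeta> \<partial>M) - p z * p \<zeta> \<partial>K) \<partial>K)"
proof -
  interpret K: prob_space K by (rule K)
  interpret M: prob_space M by (rule M)
  have [measurable]: "(\<lambda>(\<omega>, z). I \<omega> z) \<in> borel_measurable (M \<Otimes>\<^sub>M K)"
    unfolding I_def by measurable
  have [measurable]: "(\<lambda>(z, \<omega>). I \<omega> z) \<in> borel_measurable (K \<Otimes>\<^sub>M M)"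
    by measurable
  have [measurable]: "p \<in> borel_measurable K"
    unfolding p_def by measurable
  have I01: "0 \<le> I \<omega> z \<and> I \<omega> z \<le> 1" for \<omega> z unfolding I_def by (auto simp: indicator_def)
  have p01: "0 \<le> p z \<and> p z \<le> 1" for z
    using I01 integral_abs_le_1[OF M, of "\<lambda>\<omega>. I \<omega> z"] unfolding p_def
    by (auto intro!: Bochner_Integration.integral_nonneg)
  define D where "D = (\<lambda>\<omega> z. I \<omega> z - p z)"
  have DD: "\<bar>D \<omega> z * D \<omega> \<zeta>\<bar> \<le> 1" for \<omega> z \<zeta>
  proof -
    have "\<bar>D \<omega> x\<bar> \<le> 1" for x unfolding D_def using I01[of \<omega> x] p01[of x] by linarith
    then show ?thesis by (metis abs_mult mult_le_one abs_ge_zero)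
  qed
  have [measurable]: "(\<lambda>(\<omega>, z). D \<omega> z) \<in> borel_measurable (M \<Otimes>\<^sub>M K)"
    unfolding D_def by measurable
  have Iint: "integrable K (I \<omega>)" if "\<omega> \<in> space M" for \<omega>
    using that I01 by (intro K.integrable_const_bound[where B=1]) auto
  have square: "((\<integral>z. I \<omega> z \<partial>K) - (\<integral>z. p z \<partial>K))\<^sup>2 = (\<integral>\<zeta>. (\<integral>z. D \<omega> z * D \<omega> \<zeta> \<partial>K) \<partial>K)"
    if "\<omega> \<in> space M" for \<omega>
  proof -
    have "(\<integral>z. I \<omega> z \<partial>K) - (\<integral>z. p z \<partial>K) = (\<integral>z. D \<omega> z \<partial>K)"
      unfolding D_def using p01
      by (intro Bochner_Integration.integral_diff[symmetric] Iint[OF that]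
          K.integrable_const_bound[where B=1]) auto
    then show ?thesis by (simp add: power2_eq_square)
  qed
  have cov: "(\<integral>\<omega>. D \<omega> z * D \<omega> \<zeta> \<partial>M) = (\<integral>\<omega>. I \<omega> z * I \<omega> \<zeta> \<partial>M) - p z * p \<zeta>"
    if "z \<in> space K" "\<zeta> \<in> space K" for z \<zeta>
    unfolding D_def p_def using that I01
    by (intro integral_centered_product[OF M] M.integrable_const_bound[where B=1])
       (auto simp: mult_le_one)
  have "(\<integral>\<omega>. ((\<integral>z. I \<omega> z \<partial>K) - (\<integral>z. p z \<partial>K))\<^sup>2 \<partial>M)
      = (\<integral>\<omega>. (\<integral>\<zeta>. (\<integral>z. D \<omega> z * D \<omega> \<zeta> \<partial>K) \<partial>K) \<partial>M)"
    using square by (intro Bochner_Integration.integral_cong) auto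
  also have "\<dots> = (\<integral>\<zeta>. (\<integral>\<omega>. (\<integral>z. D \<omega> z * D \<omega> \<zeta> \<partial>K) \<partial>M) \<partial>K)"
    using DD by (intro Fubini_bounded[OF M K, where c=1] integral_abs_le_1[OF K]) auto
  also have "\<dots> = (\<integral>\<zeta>. (\<integral>z. (\<integral>\<omega>. D \<omega> z * D \<omega> \<zeta> \<partial>M) \<partial>K) \<partial>K)"
    using DD by (intro Bochner_Integration.integral_cong Fubini_bounded[OF M K, where c=1]) auto
  also have "\<dots> = (\<integral>\<zeta>. (\<integral>z. (\<integral>\<omega>. I \<omega> z * I \<omega> \<zeta> \<partial>M) - p z * p \<zeta> \<partial>K) \<partial>K)"
    using cov by (intro Bochner_Integration.integral_cong) auto
  finally show ?thesis .
qed


text \<open>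
  Almost-sure convergence from summable expectations: if nonnegative integrable functions
  have summable integrals, then their sum is integrable, hence finite a.e., hence the terms
  tend to zero a.e.\<close>
lemma AE_tendsto_zero_of_summable_integrals:
  fixes f :: "nat \<Rightarrow> 'a \<Rightarrow> real"
  assumes int: "\<And>n. integrable M (f n)" and nonneg: "\<And>n x. 0 \<le> f n x"
    and S: "summable (\<lambda>n. integral\<^sup>L M (f n))"
  shows "AE x in M. (\<lambda>n. f n x) \<longlonglongrightarrow> 0"
proof -
  have mf: "(\<lambda>x. ennreal (f n x)) \<in> borel_measurable M" for n
    using int[of n] by auto
  have "(\<integral>\<^sup>+x. (\<Sum>n. ennreal (f n x)) \<partial>M) = (\<Sum>n. \<integral>\<^sup>+x. ennreal (f n x) \<partial>M)"
    by (rule nn_integral_suminf[OF mf])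
  also have "\<dots> = (\<Sum>n. ennreal (integral\<^sup>L M (f n)))"
    using int nonneg by (subst nn_integral_eq_integral) auto
  also have "\<dots> = ennreal (\<Sum>n. integral\<^sup>L M (f n))"
    using S nonneg by (intro suminf_ennreal2) (auto intro: Bochner_Integration.integral_nonneg)
  finally have "(\<integral>\<^sup>+x. (\<Sum>n. ennreal (f n x)) \<partial>M) \<noteq> \<infinity>" by simp
  then have "AE x in M. (\<Sum>n. ennreal (f n x)) \<noteq> \<infinity>"
    using mf by (intro nn_integral_PInf_AE) auto
  then show ?thesis
  proof eventually_elim
    case (elim x)
    then have "summable (\<lambda>n. f n x)"
      using nonneg by (intro summable_suminf_not_top) auto
    then show ?case by (rule summable_LIMSEQ_zero)
  qed
qed

definition closed_approx :: "'b::metric_space set \<Rightarrow> nat \<Rightarrow> 'b \<Rightarrow> real" where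
  "closed_approx F k x = max 0 (1 - real (Suc k) * infdist x F)"

lemma closed_approx_continuous: "continuous_on UNIV (closed_approx F k)"
  unfolding closed_approx_def by (intro continuous_intros)

lemma closed_approx_bounds: "0 \<le> closed_approx F k x \<and> closed_approx F k x \<le> 1"
  unfolding closed_approx_def using infdist_nonneg[of x F] by auto

lemma closed_approx_abs_le_1: "\<bar>closed_approx F k x\<bar> \<le> 1"
  using closed_approx_bounds[of F k x] by simp

lemma closed_approx_ge_indicator:
  assumes "closed F" shows "indicator F x \<le> closed_approx F k x"
  using assms closed_approx_bounds[of F k x] in_closed_iff_infdist_zero[of F x]
  by (cases "x \<in> F") (auto simp: closed_approx_def)

lemma closed_approx_tendsto:
  assumes F: "closed F" "F \<noteq> {}"
  shows "(\<lambda>k. closed_approx F k x) \<longlonglongrightarrow> indicator F x"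
proof (cases "x \<in> F")
  case True
  then have "infdist x F = 0" using in_closed_iff_infdist_zero[OF F] by simp
  then show ?thesis using True by (simp add: closed_approx_def)
next
  case False
  then have d: "infdist x F > 0"
    using in_closed_iff_infdist_zero[OF F] infdist_nonneg[of x F] by simp
  obtain k0 :: nat where k0: "1 / infdist x F < real k0" using reals_Archimedean2 by blast
  have "closed_approx F k x = 0" if "k0 \<le> k" for k
  proof -
    have "1 < real k0 * infdist x F" using k0 d by (simp add: field_simps)
    also have "\<dots> \<le> real (Suc k) * infdist x F"
      using d that by (intro mult_right_mono) auto
    finally show ?thesis by (simp add: closed_approx_def)
  qed
  then have "(\<lambda>k. closed_approx F k x) \<longlonglongrightarrow> 0"
    by (intro tendsto_eventually) (auto simp: eventually_sequentially)
  then show ?thesis using False by simp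
qed

lemma weak_conv_limsup_closed:
  fixes Ns :: "nat \<Rightarrow> 'b::euclidean_space measure" and N :: "'b measure"
  assumes Ns: "\<And>n. prob_space (Ns n)" "\<And>n. sets (Ns n) = sets borel"
    and N: "prob_space N" "sets N = sets borel"
    and W: "weak_conv_e Ns N" and F: "closed F" and e: "e > 0"
  shows "\<forall>\<^sub>F n in sequentially. measure (Ns n) F \<le> measure N F + e"
proof (cases "F = {}")
  case True then show ?thesis using e by simp
next
  case False
  interpret N: prob_space N by (rule N(1))
  let ?f = "closed_approx F"
  have Fb: "F \<in> sets borel" using F by simp
  have fmb: "?f k \<in> borel_measurable borel" for k
    by (rule borel_measurable_continuous_onI[OF closed_approx_continuous])
  have fb: "bounded (range (?f k))" for k
    using closed_approx_abs_le_1 by (intro boundedI[where B=1]) auto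
  have "(\<lambda>k. integral\<^sup>L N (?f k)) \<longlonglongrightarrow> integral\<^sup>L N (indicator F)"
    using closed_approx_tendsto[OF F False] Fb fmb
    by (intro integral_dominated_convergence[where w="\<lambda>_. 1"])
       (auto simp: measurable_cong_sets[OF N(2) refl] closed_approx_abs_le_1)
  then have "(\<lambda>k. integral\<^sup>L N (?f k)) \<longlonglongrightarrow> measure N F"
    using Fb N(2) by simp
  then have "\<forall>\<^sub>F k in sequentially. integral\<^sup>L N (?f k) < measure N F + e/2"
    using e by (intro order_tendstoD) auto
  then obtain k where k: "integral\<^sup>L N (?f k) < measure N F + e/2"
    by (auto simp: eventually_sequentially)
  have "(\<lambda>n. integral\<^sup>L (Ns n) (?f k)) \<longlonglongrightarrow> integral\<^sup>L N (?f k)"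
    using W closed_approx_continuous fb unfolding weak_conv_e_def by blast
  then have "\<forall>\<^sub>F n in sequentially. integral\<^sup>L (Ns n) (?f k) < integral\<^sup>L N (?f k) + e/2"
    using e by (intro order_tendstoD) auto
  then show ?thesis
  proof eventually_elim
    case (elim n)
    interpret Nn: prob_space "Ns n" by (rule Ns(1))
    have "measure (Ns n) F = integral\<^sup>L (Ns n) (indicator F)"
      using Fb Ns(2)[of n] by simp
    also have "\<dots> \<le> integral\<^sup>L (Ns n) (?f k)"
    proof (rule integral_mono)
      show "integrable (Ns n) (indicator F :: _ \<Rightarrow> real)"
        using Fb Ns(2)[of n] by (intro integrable_real_indicator) (auto simp: Nn.emeasure_eq_measure)
      show "integrable (Ns n) (?f k)"
        using closed_approx_abs_le_1 fmb
        by (intro Nn.integrable_const_bound[where B=1])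
           (auto simp: measurable_cong_sets[OF Ns(2) refl])
    qed (rule closed_approx_ge_indicator[OF F])
    finally show ?case using elim k by simp
  qed
qed

lemma weak_conv_continuity_set:
  fixes Ns :: "nat \<Rightarrow> 'b::euclidean_space measure" and N :: "'b measure"
  assumes Ns: "\<And>n. prob_space (Ns n)" "\<And>n. sets (Ns n) = sets borel"
    and N: "prob_space N" "sets N = sets borel"
    and W: "weak_conv_e Ns N" and B: "B \<in> sets borel" and fr: "measure N (frontier B) = 0"
  shows "(\<lambda>n. measure (Ns n) B) \<longlonglongrightarrow> measure N B"
proof (rule tendstoI)
  fix e :: real assume e: "0 < e"
  interpret N: prob_space N by (rule N(1))
  have sN: "space N = UNIV" using sets_eq_imp_space_eq[OF N(2)] by simp
  have cl: "measure N (closure B) \<le> measure N B"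
  proof -
    have "measure N (closure B) \<le> measure N (B \<union> frontier B)"
      using B N(2) closure_Un_frontier by (intro N.finite_measure_mono) auto
    also have "\<dots> \<le> measure N B + measure N (frontier B)"
      using B N(2) by (intro measure_Un_le) auto
    finally show ?thesis using fr by simp
  qed
  have int: "measure N B \<le> measure N (interior B)"
  proof -
    have "B \<subseteq> interior B \<union> frontier B"
      by (auto simp: frontier_def dest: closure_subset[THEN subsetD])
    then have "measure N B \<le> measure N (interior B \<union> frontier B)"
      using B N(2) by (intro N.finite_measure_mono) auto
    also have "\<dots> \<le> measure N (interior B) + measure N (frontier B)"
      using B N(2) by (intro measure_Un_le) auto
    finally show ?thesis using fr by simp
  qed
  have "\<forall>\<^sub>F n in sequentially. measure (Ns n) (closure B) \<le> measure N (closure B) + e/2"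
    and "\<forall>\<^sub>F n in sequentially. measure (Ns n) (- interior B) \<le> measure N (- interior B) + e/2"
    using e by (intro weak_conv_limsup_closed[OF Ns N W]; auto)+
  then show "\<forall>\<^sub>F n in sequentially. dist (measure (Ns n) B) (measure N B) < e"
  proof eventually_elim
    case (elim n)
    interpret Nn: prob_space "Ns n" by (rule Ns(1))
    have sNn: "space (Ns n) = UNIV" using sets_eq_imp_space_eq[OF Ns(2)[of n]] by simp
    have "measure (Ns n) B \<le> measure (Ns n) (closure B)"
      using B Ns(2)[of n] by (intro Nn.finite_measure_mono) (auto simp: closure_subset)
    moreover have "measure (Ns n) (interior B) \<le> measure (Ns n) B"
      using B Ns(2)[of n] by (intro Nn.finite_measure_mono) (auto simp: interior_subset)
    moreover have "measure (Ns n) (- interior B) = 1 - measure (Ns n) (interior B)"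
      using Nn.prob_compl[of "interior B"] Ns(2)[of n] sNn by (simp add: Compl_eq_Diff_UNIV)
    moreover have "measure N (- interior B) = 1 - measure N (interior B)"
      using N.prob_compl[of "interior B"] N(2) sN by (simp add: Compl_eq_Diff_UNIV)
    ultimately show ?case using elim cl int e by (simp add: dist_real_def abs_less_iff)
  qed
qed


lemma sets_mixture: "sets (mixture mu) = sets (borel :: (real^'d) measure)"
  unfolding mixture_def
  using sigma_algebra.sigma_sets_eq[OF sets.sigma_algebra_axioms[of "borel :: (real^'d) measure"]]
  by (simp add: sets_measure_of_conv)

lemma space_mixture: "space (mixture mu) = UNIV"
  using sets_eq_imp_space_eq[OF sets_mixture] by simp

text \<open>
  The set function B \<mapsto> integral over the cube of mu_z(B) is countably additive (monotone
  convergence), so the mixture assigns exactly these values to Borel sets.\<close>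
lemma emeasure_mixture:
  fixes mu :: "real^'d \<Rightarrow> (real^'d) measure"
  assumes smu: "\<And>z. sets (mu z) = sets borel"
    and mm: "\<And>B. B \<in> sets borel \<Longrightarrow> (\<lambda>z. emeasure (mu z) B) \<in> borel_measurable cube_measure"
    and B: "B \<in> sets borel"
  shows "emeasure (mixture mu) B = (\<integral>\<^sup>+z. emeasure (mu z) B \<partial>cube_measure)"
proof -
  define \<nu> where "\<nu> = (\<lambda>B. \<integral>\<^sup>+ z. indicator unit_cube z * emeasure (mu z) B \<partial>lborel)"
  have mm': "(\<lambda>z. indicator unit_cube z * emeasure (mu z) A) \<in> borel_measurable lborel"
    if "A \<in> sets borel" for A
    using mm[OF that]
      borel_measurable_restrict_space_iff_ennreal[of unit_cube lborel "\<lambda>z. emeasure (mu z) A"]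
    by (simp add: mult.commute)
  have ca: "countably_additive (sets borel) \<nu>"
    unfolding countably_additive_def
  proof (intro allI impI)
    fix A :: "nat \<Rightarrow> (real^'d) set"
    assume A: "range A \<subseteq> sets borel" "disjoint_family A" "\<Union> (range A) \<in> sets borel"
    have "(\<Sum>i. \<nu> (A i)) = (\<integral>\<^sup>+ z. (\<Sum>i. indicator unit_cube z * emeasure (mu z) (A i)) \<partial>lborel)"
      unfolding \<nu>_def using A by (intro nn_integral_suminf[symmetric] mm') auto
    also have "\<dots> = \<nu> (\<Union> (range A))"
      unfolding \<nu>_def using A smu by (simp add: ennreal_suminf_cmult suminf_emeasure)
    finally show "(\<Sum>i. \<nu> (A i)) = \<nu> (\<Union> (range A))" .
  qed
  have "emeasure (mixture mu) B = \<nu> B"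
    unfolding mixture_def \<nu>_def[symmetric]
    using sets.sigma_algebra_axioms[of "borel :: (real^'d) measure"] B ca
    by (intro emeasure_measure_of_sigma) (auto simp: positive_def \<nu>_def)
  also have "\<dots> = (\<integral>\<^sup>+z. emeasure (mu z) B \<partial>cube_measure)"
    unfolding \<nu>_def by (subst nn_integral_restrict_space) (auto simp: mult.commute)
  finally show ?thesis .
qed

lemma prob_space_mixture:
  fixes mu :: "real^'d \<Rightarrow> (real^'d) measure"
  assumes smu: "\<And>z. sets (mu z) = sets borel"
    and mm: "\<And>B. B \<in> sets borel \<Longrightarrow> (\<lambda>z. emeasure (mu z) B) \<in> borel_measurable cube_measure"
    and prob: "AE z in cube_measure. prob_space (mu z)"
  shows "prob_space (mixture mu)"
proof (rule prob_spaceI)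
  have "AE z in cube_measure. emeasure (mu z) UNIV = 1"
    using prob
  proof eventually_elim
    case (elim z)
    then show ?case
      using prob_space.emeasure_space_1 sets_eq_imp_space_eq[OF smu[of z]] by fastforce
  qed
  then have "(\<integral>\<^sup>+z. emeasure (mu z) UNIV \<partial>cube_measure) = (\<integral>\<^sup>+z. 1 \<partial>(cube_measure :: (real^'d) measure))"
    by (rule nn_integral_cong_AE)
  also have "\<dots> = 1"
    using prob_space.emeasure_space_1[OF prob_space_cube_measure] by simp
  finally show "emeasure (mixture mu) (space (mixture mu)) = 1"
    by (simp add: space_mixture emeasure_mixture[OF smu mm])
qed

lemma measure_mixture:
  fixes mu :: "real^'d \<Rightarrow> (real^'d) measure"
  assumes smu: "\<And>z. sets (mu z) = sets borel"
    and mm: "\<And>B. B \<in> sets borel \<Longrightarrow> (\<lambda>z. emeasure (mu z) B) \<in> borel_measurable cube_measure"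
    and prob: "AE z in cube_measure. prob_space (mu z)"
    and B: "B \<in> sets borel"
  shows "measure (mixture mu) B = (\<integral>z. measure (mu z) B \<partial>cube_measure)"
proof -
  interpret K: prob_space "cube_measure :: (real^'d) measure" by (rule prob_space_cube_measure)
  interpret mix: prob_space "mixture mu" by (rule prob_space_mixture[OF smu mm prob])
  have "(\<integral>\<^sup>+z. emeasure (mu z) B \<partial>cube_measure) = (\<integral>\<^sup>+z. ennreal (measure (mu z) B) \<partial>cube_measure)"
    using prob
  proof (intro nn_integral_cong_AE, eventually_elim)
    case (elim z)
    interpret prob_space "mu z" by (rule elim)
    show ?case by (rule emeasure_eq_measure)
  qed
  also have "\<dots> = ennreal (\<integral>z. measure (mu z) B \<partial>cube_measure)"
  proof (intro nn_integral_eq_integral K.integrable_const_bound[where B=1])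
    show "AE z in cube_measure. norm (measure (mu z) B) \<le> 1"
      using prob by eventually_elim (simp add: prob_space.prob_le_1)
    show "(\<lambda>z. measure (mu z) B) \<in> borel_measurable cube_measure"
      unfolding measure_def using mm[OF B] by measurable
  qed auto
  finally show ?thesis
    using emeasure_mixture[OF smu mm B] B
    by (simp add: mix.emeasure_eq_measure sets_mixture integral_nonneg_AE)
qed

lemma mixture_null_AE:
  fixes mu :: "real^'d \<Rightarrow> (real^'d) measure"
  assumes smu: "\<And>z. sets (mu z) = sets borel"
    and mm: "\<And>B. B \<in> sets borel \<Longrightarrow> (\<lambda>z. emeasure (mu z) B) \<in> borel_measurable cube_measure"
    and prob: "AE z in cube_measure. prob_space (mu z)"
    and A: "A \<in> sets borel" and null: "measure (mixture mu) A = 0"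
  shows "AE z in cube_measure. measure (mu z) A = 0"
proof -
  interpret mix: prob_space "mixture mu" by (rule prob_space_mixture[OF smu mm prob])
  have "(\<integral>\<^sup>+z. emeasure (mu z) A \<partial>cube_measure) = 0"
    using emeasure_mixture[OF smu mm A] null A by (simp add: mix.emeasure_eq_measure sets_mixture)
  then have "AE z in cube_measure. emeasure (mu z) A = 0"
    using nn_integral_0_iff_AE[OF mm[OF A]] by simp
  then show ?thesis by eventually_elim (simp add: measure_def)
qed

lemma sets_occupation: "sets (occupation y) = sets borel"
  unfolding occupation_def by simp

lemma prob_space_occupation:
  "y \<in> borel_measurable cube_measure \<Longrightarrow> prob_space (occupation y)"
  unfolding occupation_def by (rule prob_space.prob_space_distr[OF prob_space_cube_measure])

lemma measure_occupation:
  assumes y: "y \<in> borel_measurable cube_measure" and B: "B \<in> sets borel"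
  shows "measure (occupation y) B = (\<integral>z. indicator B (y z) \<partial>cube_measure)"
  using measure_distr[OF y B] integral_indicator_comp[of cube_measure B y]
  by (simp add: occupation_def vimage_def Int_def conj_commute)


lemma convergence_determiningD:
  assumes "convergence_determining C"
    and "\<And>n. prob_space (Ns n)" "\<And>n. sets (Ns n) = sets borel"
    and "prob_space N" "sets N = sets borel"
    and "\<And>B. B \<in> C \<Longrightarrow> measure N (frontier B) = 0 \<Longrightarrow> (\<lambda>n. measure (Ns n) B) \<longlonglongrightarrow> measure N B"
  shows "weak_conv_e Ns N"
  using assms unfolding convergence_determining_def by blast

lemma variance_occupation:
  fixes Y :: "'a \<Rightarrow> real^'d \<Rightarrow> real^'d"
  assumes M: "prob_space M"
    and Ym[measurable]: "(\<lambda>(\<omega>, z). Y \<omega> z) \<in> borel_measurable (M \<Otimes>\<^sub>M cube_measure)"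
    and B[measurable]: "B \<in> sets borel"
  shows "(\<integral>\<omega>. (measure (occupation (Y \<omega>)) B
                 - (\<integral>z. measure M {\<omega>\<in>space M. Y \<omega> z \<in> B} \<partial>cube_measure))\<^sup>2 \<partial>M)
       = (LINT \<zeta>:unit_cube|lborel. LINT z:unit_cube|lborel. ind_cov M Y B z \<zeta>)"
proof -
  have occ: "measure (occupation (Y \<omega>)) B = (\<integral>z. indicator B (Y \<omega> z) \<partial>cube_measure)"
    if "\<omega> \<in> space M" for \<omega>
    using that by (intro measure_occupation) auto
  have joint: "(\<integral>\<omega>. indicator B (Y \<omega> z) * indicator B (Y \<omega> \<zeta>) \<partial>M)
             = measure M {\<omega>\<in>space M. Y \<omega> z \<in> B \<and> Y \<omega> \<zeta> \<in> B}" for z \<zeta>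
    using integral_indicator_comp[of M "B \<times> B" "\<lambda>\<omega>. (Y \<omega> z, Y \<omega> \<zeta>)"]
    by (simp add: indicator_times)
  have "(\<integral>\<omega>. (measure (occupation (Y \<omega>)) B
                 - (\<integral>z. measure M {\<omega>\<in>space M. Y \<omega> z \<in> B} \<partial>cube_measure))\<^sup>2 \<partial>M)
      = (\<integral>\<omega>. ((\<integral>z. indicator B (Y \<omega> z) \<partial>cube_measure)
                 - (\<integral>z. measure M {\<omega>\<in>space M. Y \<omega> z \<in> B} \<partial>cube_measure))\<^sup>2 \<partial>M)"
    using occ by (intro Bochner_Integration.integral_cong) auto
  also have "\<dots> = (\<integral>\<zeta>. (\<integral>z. ind_cov M Y B z \<zeta> \<partial>cube_measure) \<partial>cube_measure)"
    using variance_average_indicator[OF M prob_space_cube_measure Ym B]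
    by (simp add: integral_indicator_comp joint ind_cov_def)
  finally show ?thesis by (simp add: set_integral_unit_cube)
qed

text \<open>
  Convergence of the expected occupation mass: for a mu-continuity set B the probability
  that Y_n(z) lies in B tends to mu_z(B) for a.e. z (portmanteau), so its cube average
  tends to mu(B) by dominated convergence.\<close>
lemma expected_occupation_tendsto:
  fixes Y :: "nat \<Rightarrow> 'a \<Rightarrow> real^'d \<Rightarrow> real^'d" and mu :: "real^'d \<Rightarrow> (real^'d) measure"
  assumes M: "prob_space M"
    and Ym[measurable]: "\<And>n. (\<lambda>(\<omega>, z). Y n \<omega> z) \<in> borel_measurable (M \<Otimes>\<^sub>M cube_measure)"
    and smu: "\<And>z. sets (mu z) = sets borel"
    and mm: "\<And>B. B \<in> sets borel \<Longrightarrow> (\<lambda>z. emeasure (mu z) B) \<in> borel_measurable cube_measure"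
    and conv: "AE z in cube_measure. prob_space (mu z) \<and>
                 weak_conv_e (\<lambda>n. distr M borel (\<lambda>\<omega>. Y n \<omega> z)) (mu z)"
    and B[measurable]: "B \<in> sets borel" and fr: "measure (mixture mu) (frontier B) = 0"
  shows "(\<lambda>n. \<integral>z. measure M {\<omega>\<in>space M. Y n \<omega> z \<in> B} \<partial>cube_measure) \<longlonglongrightarrow> measure (mixture mu) B"
proof -
  interpret M: prob_space M by (rule M)
  interpret K: prob_space "cube_measure :: (real^'d) measure" by (rule prob_space_cube_measure)
  have prob: "AE z in cube_measure. prob_space (mu z)"
    using conv by eventually_elim simp
  have [measurable]: "(\<lambda>(z, \<omega>). Y n \<omega> z) \<in> borel_measurable (cube_measure \<Otimes>\<^sub>M M)" for n
    by measurable
  have Yz[measurable]: "(\<lambda>\<omega>. Y n \<omega> z) \<in> borel_measurable M" if "z \<in> space cube_measure" for n z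
    using that by measurable
  define P where "P n z = measure M {\<omega>\<in>space M. Y n \<omega> z \<in> B}" for n z
  have P_integral: "P n z = (\<integral>\<omega>. indicator B (Y n \<omega> z) \<partial>M)" for n z
    by (simp add: P_def integral_indicator_comp)
  have [measurable]: "P n \<in> borel_measurable cube_measure" for n
    unfolding P_integral by measurable
  have "AE z in cube_measure. measure (mu z) (frontier B) = 0"
    using fr by (intro mixture_null_AE[OF smu mm prob]) auto
  then have P_lim: "AE z in cube_measure. (\<lambda>n. P n z) \<longlonglongrightarrow> measure (mu z) B"
    using conv AE_space
  proof eventually_elim
    case (elim z)
    have "(\<lambda>n. measure (distr M borel (\<lambda>\<omega>. Y n \<omega> z)) B) \<longlonglongrightarrow> measure (mu z) B"
      using elim smu M.prob_space_distr[OF Yz] by (intro weak_conv_continuity_set) auto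
    moreover have "measure (distr M borel (\<lambda>\<omega>. Y n \<omega> z)) B = P n z" for n
      using elim by (subst measure_distr) (auto simp: P_def vimage_def Int_def conj_commute)
    ultimately show ?case by simp
  qed
  have "(\<lambda>n. \<integral>z. P n z \<partial>cube_measure) \<longlonglongrightarrow> (\<integral>z. measure (mu z) B \<partial>cube_measure)"
  proof (rule integral_dominated_convergence[where w="\<lambda>_. 1"])
    show "AE z in cube_measure. (\<lambda>n. P n z) \<longlonglongrightarrow> measure (mu z) B" by (rule P_lim)
    show "(\<lambda>z. measure (mu z) B) \<in> borel_measurable cube_measure"
      unfolding measure_def using mm[OF B] by measurable
    show "AE z in cube_measure. norm (P n z) \<le> 1" for n
      by (simp add: P_def)
  qed auto
  then show ?thesis
    by (simp add: P_def measure_mixture[OF smu mm prob B])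
qed

text \<open>
  Almost-sure convergence of the occupation mass of a single set: the centred masses have
  summable second moments, given by the covariance integrals, hence tend to zero a.s.\<close>
lemma occupation_tendsto_AE:
  fixes Y :: "nat \<Rightarrow> 'a \<Rightarrow> real^'d \<Rightarrow> real^'d"
  assumes M: "prob_space M"
    and Ym[measurable]: "\<And>n. (\<lambda>(\<omega>, z). Y n \<omega> z) \<in> borel_measurable (M \<Otimes>\<^sub>M cube_measure)"
    and B[measurable]: "B \<in> sets borel"
    and var: "summable (\<lambda>n. LINT \<zeta>:unit_cube|lborel. LINT z:unit_cube|lborel. ind_cov M (Y n) B z \<zeta>)"
    and mean: "(\<lambda>n. \<integral>z. measure M {\<omega>\<in>space M. Y n \<omega> z \<in> B} \<partial>cube_measure) \<longlonglongrightarrow> L"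
  shows "AE \<omega> in M. (\<lambda>n. measure (occupation (Y n \<omega>)) B) \<longlonglongrightarrow> L"
proof -
  interpret M: prob_space M by (rule M)
  interpret K: prob_space "cube_measure :: (real^'d) measure" by (rule prob_space_cube_measure)
  define X where "X n \<omega> = measure (occupation (Y n \<omega>)) B" for n \<omega>
  define c where "c n = (\<integral>z. measure M {\<omega>\<in>space M. Y n \<omega> z \<in> B} \<partial>cube_measure)" for n
  have Y\<omega>[measurable]: "Y n \<omega> \<in> borel_measurable cube_measure" if "\<omega> \<in> space M" for n \<omega>
    using that by measurable
  have X01: "0 \<le> X n \<omega> \<and> X n \<omega> \<le> 1" if "\<omega> \<in> space M" for n \<omega>
    using prob_space.prob_le_1[OF prob_space_occupation[OF Y\<omega>[OF that]]] by (simp add: X_def)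
  have c01: "0 \<le> c n \<and> c n \<le> 1" for n
    using integral_abs_le_1[OF prob_space_cube_measure, of "\<lambda>z. measure M {\<omega>\<in>space M. Y n \<omega> z \<in> B}"]
    unfolding c_def by (auto intro!: Bochner_Integration.integral_nonneg)
  have [measurable]: "X n \<in> borel_measurable M" for n
  proof (rule measurable_cong[THEN iffD2])
    show "\<omega> \<in> space M \<Longrightarrow> X n \<omega> = (\<integral>z. indicator B (Y n \<omega> z) \<partial>cube_measure)" for \<omega>
      unfolding X_def by (intro measure_occupation) auto
  qed measurable
  have "(X n \<omega> - c n)\<^sup>2 \<le> 1" if "\<omega> \<in> space M" for n \<omega>
  proof -
    have "\<bar>X n \<omega> - c n\<bar> \<le> 1" using X01[OF that, of n] c01[of n] by linarith
    then show ?thesis by (simp add: abs_square_le_1)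
  qed
  then have "integrable M (\<lambda>\<omega>. (X n \<omega> - c n)\<^sup>2)" for n
    by (intro M.integrable_const_bound[where B=1] AE_I2) auto
  moreover have "summable (\<lambda>n. \<integral>\<omega>. (X n \<omega> - c n)\<^sup>2 \<partial>M)"
    using var by (simp add: X_def c_def variance_occupation[OF M Ym B])
  ultimately have "AE \<omega> in M. (\<lambda>n. (X n \<omega> - c n)\<^sup>2) \<longlonglongrightarrow> 0"
    by (intro AE_tendsto_zero_of_summable_integrals) auto
  then show ?thesis
  proof eventually_elim
    case (elim \<omega>)
    then have "(\<lambda>n. sqrt ((X n \<omega> - c n)\<^sup>2)) \<longlonglongrightarrow> sqrt 0" by (rule tendsto_real_sqrt)
    then have "(\<lambda>n. X n \<omega> - c n) \<longlonglongrightarrow> 0" by (simp add: tendsto_rabs_zero_iff)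
    then have "(\<lambda>n. (X n \<omega> - c n) + c n) \<longlonglongrightarrow> 0 + L"
      using mean unfolding c_def by (rule tendsto_add)
    then show ?case by (simp add: X_def)
  qed
qed

lemma continuity_set_tendsto_AE:
  fixes Y :: "nat \<Rightarrow> 'a \<Rightarrow> real^'d \<Rightarrow> real^'d" and mu :: "real^'d \<Rightarrow> (real^'d) measure"
  assumes M: "prob_space M"
    and Ym: "\<And>n. (\<lambda>(\<omega>, z). Y n \<omega> z) \<in> borel_measurable (M \<Otimes>\<^sub>M cube_measure)"
    and smu: "\<And>z. sets (mu z) = sets borel"
    and mm: "\<And>B. B \<in> sets borel \<Longrightarrow> (\<lambda>z. emeasure (mu z) B) \<in> borel_measurable cube_measure"
    and conv: "AE z in cube_measure. prob_space (mu z) \<and>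
                 weak_conv_e (\<lambda>n. distr M borel (\<lambda>\<omega>. Y n \<omega> z)) (mu z)"
    and B: "B \<in> sets borel" and fr: "measure (mixture mu) (frontier B) = 0"
    and \<sigma>: "strict_mono \<sigma>"
    and var: "summable (\<lambda>n. LINT \<zeta>:unit_cube|lborel. LINT z:unit_cube|lborel.
                               ind_cov M (Y (\<sigma> n)) B z \<zeta>)"
  shows "AE \<omega> in M. (\<lambda>n. measure (occupation (Y (\<sigma> n) \<omega>)) B) \<longlonglongrightarrow> measure (mixture mu) B"
proof -
  have "(\<lambda>n. \<integral>z. measure M {\<omega>\<in>space M. Y n \<omega> z \<in> B} \<partial>cube_measure) \<longlonglongrightarrow> measure (mixture mu) B"
    by (rule expected_occupation_tendsto[OF M Ym smu mm conv B fr])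
  from LIMSEQ_subseq_LIMSEQ[OF this \<sigma>] show ?thesis
    using var by (intro occupation_tendsto_AE[OF M Ym B]) (auto simp: comp_def)
qed

theorem mainTheorem7:
  fixes M :: "'a measure"
    and Y :: "nat \<Rightarrow> 'a \<Rightarrow> real^'d \<Rightarrow> real^'d"
    and mu :: "real^'d \<Rightarrow> (real^'d) measure"
    and C :: "(real^'d) set set"
    and \<sigma> :: "nat \<Rightarrow> nat"
  assumes "prob_space M"
    and "\<And>n. (\<lambda>(\<omega>, z). Y n \<omega> z) \<in> borel_measurable (M \<Otimes>\<^sub>M restrict_space lborel unit_cube)"
    and "\<And>z. sets (mu z) = sets borel"
    and "AE z in lborel. z \<in> unit_cube \<longrightarrow> prob_space (mu z) \<and>
           weak_conv_e (\<lambda>n. distr M borel (\<lambda>\<omega>. Y n \<omega> z)) (mu z)"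
    and "\<And>B. B \<in> sets borel \<Longrightarrow>
           (\<lambda>z. emeasure (mu z) B) \<in> borel_measurable (restrict_space lborel unit_cube)"
    and "countable C" and "convergence_determining C"
    and "strict_mono \<sigma>"
    and "\<And>B. B \<in> C \<Longrightarrow> measure (mixture mu) (frontier B) = 0 \<Longrightarrow>
           summable (\<lambda>n. LINT \<zeta>:unit_cube|lborel. LINT z:unit_cube|lborel.
                          ind_cov M (Y (\<sigma> n)) B z \<zeta>)"
  shows "AE \<omega> in M. weak_conv_e (\<lambda>n. occupation (Y (\<sigma> n) \<omega>)) (mixture mu)"
proof -
  have conv: "AE z in cube_measure. prob_space (mu z) \<and>
                weak_conv_e (\<lambda>n. distr M borel (\<lambda>\<omega>. Y n \<omega> z)) (mu z)"
    unfolding AE_cube_measure_iff by (rule assms(4))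
  then have prob: "AE z in cube_measure. prob_space (mu z)"
    by eventually_elim simp
  have [measurable]: "(\<lambda>(\<omega>, z). Y n \<omega> z) \<in> borel_measurable (M \<Otimes>\<^sub>M cube_measure)" for n
    by (rule assms(2))
  have C_borel: "C \<subseteq> sets borel"
    using assms(7) by (simp add: convergence_determining_def)
  text \<open>Each continuity set in C converges a.s.; C is countable, so all do simultaneously.\<close>
  have "AE \<omega> in M. \<forall>B\<in>{B\<in>C. measure (mixture mu) (frontier B) = 0}.
          (\<lambda>n. measure (occupation (Y (\<sigma> n) \<omega>)) B) \<longlonglongrightarrow> measure (mixture mu) B"
    using assms(6,8,9) C_borel
    by (subst AE_ball_countable) (auto intro!: continuity_set_tendsto_AE[OF assms(1,2,3,5) conv])
  then show ?thesis
    using AE_space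
  proof eventually_elim
    case (elim \<omega>)
    have "prob_space (occupation (Y (\<sigma> n) \<omega>))" for n
      using elim(2) by (intro prob_space_occupation) measurable
    moreover have "prob_space (mixture mu)"
      using prob by (intro prob_space_mixture assms(3,5))
    ultimately show ?case
      using elim(1) by (intro convergence_determiningD[OF assms(7)] sets_mixture sets_occupation) auto
  qed
qed

end
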